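(* Let $n,a,h,t$ be positive integers with $h\le n$ and $a\le t\le ah$. Let $\mathcal C\subseteq\mathbb Z^n$ be an $(a,h,t)$-AED code in $\mathbb Z^n$. Then its upper density satisfies $\overline{\mu}(\mathcal C)\le \frac{1}{t+1}$.
   Context: Channel over the alphabet $\mathbb Z$: an input $\mathbf x=(x_1,\dots,x_n)\in\mathbb Z^n$ can produce any output $\mathbf y\in\mathbb Z^n$ satisfying (1) $0\le y_i-x_i\le a$ for all $i$; (2) $\sum_{i=1}^n \mathbb 1_{\{y_i\ne x_i\}}\le h$; (3) $\sum_{i=1}^n (y_i-x_i)\le t$. Such error vectors $\mathbf y-\mathbf x$ are called $(a,h,t)$-asymmetric errors, and $\mathrm{Out}(\mathbf x)$ denotes the set of all such outputs $\mathbf y$. A code $\mathcal C\subseteq\mathbb Z^n$ is an $(a,h,t)$-AED (asymmetric-error-detecting) code if for all $\mathbf x\in\mathcal C$ and all $\mathbf y\in\mathrm{Out}(\mathbf x)$ with $\mathbf y\neq\mathbf x$, we have $\mathbf y\notin\mathcal C$. The upper density of $\mathcal C\subseteq\mathbb Z^n$ is $\overline{\mu}(\mathcal C)=\limsup_{k\to\infty}\frac{|\mathcal C\cap\{-k,\dots,k\}^n|}{(2k+1)^n}$. *)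

theory Defs
  imports "HOL-Analysis.Analysis"
begin

definition zvecs :: "nat \<Rightarrow> int list set" where
  "zvecs n = {x. length x = n}"

definition asym_error :: "int \<Rightarrow> nat \<Rightarrow> int \<Rightarrow> int list \<Rightarrow> bool" where
  "asym_error a h t e \<longleftrightarrow>
     (\<forall>i<length e. 0 \<le> e ! i \<and> e ! i \<le> a) \<and>
     card {i. i < length e \<and> e ! i \<noteq> 0} \<le> h \<and>
     sum_list e \<le> t"

definition Out :: "int \<Rightarrow> nat \<Rightarrow> int \<Rightarrow> int list \<Rightarrow> int list set" where
  "Out a h t x = {y. length y = length x \<and> asym_error a h t (map2 (-) y x)}"

definition AED_code :: "nat \<Rightarrow> int \<Rightarrow> nat \<Rightarrow> int \<Rightarrow> int list set \<Rightarrow> bool" where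
  "AED_code n a h t C \<longleftrightarrow> C \<subseteq> zvecs n \<and>
     (\<forall>x\<in>C. \<forall>y\<in>Out a h t x. y \<noteq> x \<longrightarrow> y \<notin> C)"

definition box :: "nat \<Rightarrow> nat \<Rightarrow> int list set" where
  "box n k = {x. length x = n \<and> set x \<subseteq> {- int k..int k}}"

definition upper_density :: "nat \<Rightarrow> int list set \<Rightarrow> ereal" where
  "upper_density n C =
     limsup (\<lambda>k. ereal (real (card (C \<inter> box n k)) / (2 * real k + 1) ^ n))"

end

theory Submission imports Defs "HOL-Real_Asymp.Real_Asymp" begin

text \<open>For 0 \<le> j \<le> t let s_j be the vector that pours the amount j greedily into the
coordinates, at most a per coordinate. For i < j \<le> t the difference s_j - s_i is an
(a,h,t)-asymmetric error: it is nonnegative, bounded by a, supported on the first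
\<lceil>t/a\<rceil> \<le> h coordinates and sums to j - i \<le> t. Hence for an AED code C the translates
C - s_j (0 \<le> j \<le> t) are pairwise disjoint, so the map (c, j) \<mapsto> c - s_j embeds
(C \<inter> [-k,k]^n) \<times> {0..t} into [-(k+a), k+a]^n. Thus (t+1) |C \<inter> [-k,k]^n| \<le> (2(k+a)+1)^n,
and the ratio of (2k+2a+1)^n to (2k+1)^n tends to 1.\<close>

definition staircase_entry :: "int \<Rightarrow> int \<Rightarrow> nat \<Rightarrow> int" where
  "staircase_entry a j p = max 0 (min a (j - a * int p))"

definition staircase :: "int \<Rightarrow> nat \<Rightarrow> int \<Rightarrow> int list" where
  "staircase a n j = map (staircase_entry a j) [0..<n]"

lemma sum_staircase_entry:
  assumes "a \<ge> 0"
  shows "(\<Sum>p<n. staircase_entry a j p) = max 0 (min (a * int n) j)"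
  using assms
proof (induction n arbitrary: j)
  case 0
  then show ?case by (simp add: staircase_entry_def)
next
  case (Suc n)
  have "(\<Sum>p<Suc n. staircase_entry a j p)
      = staircase_entry a j 0 + (\<Sum>p<n. staircase_entry a j (Suc p))"
    by (rule sum.lessThan_Suc_shift)
  also have "(\<Sum>p<n. staircase_entry a j (Suc p)) = (\<Sum>p<n. staircase_entry a (j - a) p)"
    by (simp add: staircase_entry_def algebra_simps)
  also have "(\<Sum>p<n. staircase_entry a (j - a) p) = max 0 (min (a * int n) (j - a))"
    using Suc by simp
  finally have sum_Suc: "(\<Sum>p<Suc n. staircase_entry a j p)
      = max 0 (min a j) + max 0 (min (a * int n) (j - a))"
    by (simp add: staircase_entry_def)
  moreover have "0 \<le> a * int n" using Suc.prems by simp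
  moreover have "a * int (Suc n) = a + a * int n" by (simp add: algebra_simps)
  ultimately show ?case unfolding sum_Suc using Suc.prems by linarith
qed

lemma sum_list_staircase:
  assumes "a \<ge> 0" "0 \<le> j" "j \<le> a * int n"
  shows "sum_list (staircase a n j) = j"
  using assms by (simp add: staircase_def sum_list_sum_nth atLeast0LessThan sum_staircase_entry)

lemma sum_list_map2_minus:
  fixes xs ys :: "'a::ab_group_add list"
  assumes "length xs = length ys"
  shows "sum_list (map2 (-) xs ys) = sum_list xs - sum_list ys"
  using assms by (induction xs ys rule: list_induct2) simp_all

lemma map2_minus_swap:
  fixes xs ys us vs :: "'a::ab_group_add list"
  assumes "length xs = length ys" "length ys = length us" "length us = length vs"
    and "map2 (-) xs us = map2 (-) ys vs"
  shows "map2 (-) ys xs = map2 (-) vs us"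
  using assms by (induction xs ys us vs rule: list_induct4) (auto simp: algebra_simps)

lemma map2_minus_right_cancel:
  fixes xs ys us :: "'a::ab_group_add list"
  assumes "length xs = length ys" "length ys = length us"
    and "map2 (-) xs us = map2 (-) ys us"
  shows "xs = ys"
  using assms by (induction xs ys us rule: list_induct3) auto

lemma staircase_entry_bounds:
  assumes "a \<ge> 0"
  shows "0 \<le> staircase_entry a j p" "staircase_entry a j p \<le> a"
  using assms by (auto simp: staircase_entry_def)

lemma length_staircase [simp]: "length (staircase a n j) = n"
  by (simp add: staircase_def)

lemma nth_staircase [simp]: "p < n \<Longrightarrow> staircase a n j ! p = staircase_entry a j p"
  by (simp add: staircase_def)

lemma staircase_diff_asym_error:
  assumes "a > 0" "0 \<le> i" "i < j" "j \<le> t" "t \<le> a * int h" "h \<le> n"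
  shows "asym_error a h t (map2 (-) (staircase a n j) (staircase a n i))"
proof -
  let ?e = "map2 (-) (staircase a n j) (staircase a n i)"
  have "t \<le> a * int n" using assms by (meson order_trans mult_left_mono of_nat_mono less_imp_le)
  then have "sum_list ?e = j - i"
    using assms by (simp add: sum_list_map2_minus sum_list_staircase)
  moreover have "0 \<le> ?e ! p \<and> ?e ! p \<le> a" if "p < n" for p
    using that assms by (auto simp: staircase_entry_def)
  moreover have "{p. p < length ?e \<and> ?e ! p \<noteq> 0} \<subseteq> {..<h}"
  proof (rule subsetI, rule ccontr)
    fix p assume p: "p \<in> {p. p < length ?e \<and> ?e ! p \<noteq> 0}" and "p \<notin> {..<h}"
    then have "a * int h \<le> a * int p" using assms by simp
    then have "staircase_entry a j p = 0" "staircase_entry a i p = 0"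
      unfolding staircase_entry_def using assms by linarith+
    then show False using p by auto
  qed
  then have "card {p. p < length ?e \<and> ?e ! p \<noteq> 0} \<le> h"
    using card_mono[of "{..<h}"] by fastforce
  ultimately show ?thesis
    using assms by (simp add: asym_error_def)
qed

lemma finite_box: "finite (box n k)"
  and card_box: "card (box n k) = (2 * k + 1) ^ n"
proof -
  have "box n k = {xs. set xs \<subseteq> {- int k..int k} \<and> length xs = n}"
    by (auto simp: box_def)
  then show "finite (box n k)" "card (box n k) = (2 * k + 1) ^ n"
    by (simp_all add: finite_lists_length_eq card_lists_length_eq nat_add_distrib nat_mult_distrib)
qed

lemma map2_minus_staircase_in_box:
  assumes "c \<in> box n k" "a \<ge> 0"
  shows "map2 (-) c (staircase a n j) \<in> box n (k + nat a)"
proof -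
  have "\<bar>c ! p - staircase_entry a j p\<bar> \<le> int k + a" if "p < n" for p
  proof -
    have "c ! p \<in> {- int k..int k}"
      using assms(1) that nth_mem[of p c] unfolding box_def by blast
    then show ?thesis using staircase_entry_bounds[OF assms(2), of j p] by auto
  qed
  then show ?thesis
    using assms by (fastforce simp: box_def in_set_conv_nth)
qed

lemma AED_code_translates_disjoint:
  assumes code: "AED_code n a h t C" and "c \<in> C" "c' \<in> C"
    and "a > 0" "0 \<le> i" "i < j" "j \<le> t" "t \<le> a * int h" "h \<le> n"
  shows "map2 (-) c (staircase a n i) \<noteq> map2 (-) c' (staircase a n j)"
proof
  assume translates_eq: "map2 (-) c (staircase a n i) = map2 (-) c' (staircase a n j)"
  have len: "length c = n" "length c' = n"
    using code \<open>c \<in> C\<close> \<open>c' \<in> C\<close> by (auto simp: AED_code_def zvecs_def)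
  have diff: "map2 (-) c' c = map2 (-) (staircase a n j) (staircase a n i)"
    using map2_minus_swap[OF _ _ _ translates_eq] len by simp
  have "t \<le> a * int n" using assms by (meson order_trans mult_left_mono of_nat_mono less_imp_le)
  then have "sum_list (map2 (-) c' c) = j - i"
    unfolding diff using assms by (simp add: sum_list_map2_minus sum_list_staircase)
  then have "c' \<noteq> c"
    using \<open>i < j\<close> by (auto simp: sum_list_map2_minus)
  moreover have "c' \<in> Out a h t c"
    using staircase_diff_asym_error[OF assms(4-9)] diff len by (simp add: Out_def)
  ultimately show False
    using code \<open>c \<in> C\<close> \<open>c' \<in> C\<close> by (auto simp: AED_code_def)
qed

lemma AED_code_card_box_le:
  assumes code: "AED_code n a h t C"
    and "a > 0" "0 \<le> t" "t \<le> a * int h" "h \<le> n"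
  shows "card (C \<inter> box n k) * (nat t + 1) \<le> card (box n (k + nat a))"
proof -
  define translate where "translate = (\<lambda>(c, j). map2 (-) c (staircase a n j))"
  have "inj_on translate ((C \<inter> box n k) \<times> {0..t})"
  proof (rule inj_onI, clarify)
    fix c j c' j'
    assume in_C: "c \<in> C" "c' \<in> C" and j: "j \<in> {0..t}" "j' \<in> {0..t}"
      and eq: "translate (c, j) = translate (c', j')"
    then have eq': "map2 (-) c (staircase a n j) = map2 (-) c' (staircase a n j')"
      by (simp add: translate_def)
    have "j = j'"
      using AED_code_translates_disjoint[OF code in_C _ _ _ _ assms(4,5)]
        AED_code_translates_disjoint[OF code in_C(2,1) _ _ _ _ assms(4,5)]
        eq' j assms(2) by (metis atLeastAtMost_iff linorder_neqE)
    moreover have "length c = n" "length c' = n"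
      using code in_C by (auto simp: AED_code_def zvecs_def)
    ultimately show "c = c' \<and> j = j'"
      using map2_minus_right_cancel[of c c' "staircase a n j"] eq' by simp
  qed
  moreover have "translate ` ((C \<inter> box n k) \<times> {0..t}) \<subseteq> box n (k + nat a)"
    using map2_minus_staircase_in_box assms(2) by (auto simp: translate_def)
  ultimately have "card ((C \<inter> box n k) \<times> {0..t}) \<le> card (box n (k + nat a))"
    using card_inj_on_le finite_box by blast
  then show ?thesis
    using \<open>0 \<le> t\<close> by (simp add: card_cartesian_product nat_add_distrib)
qed

lemma upper_density_le:
  assumes "w > 0" and fits: "\<And>k. real (card (C \<inter> box n k)) * w \<le> real (card (box n (k + m)))"
  shows "upper_density n C \<le> ereal (1 / w)"
proof -
  define bound where
    "bound k = 1 / w * ((2 * real k + 2 * real m + 1) / (2 * real k + 1)) ^ n" for k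
  have "real (card (C \<inter> box n k)) / (2 * real k + 1) ^ n \<le> bound k" for k
  proof -
    have "real (card (C \<inter> box n k)) \<le> (2 * real k + 2 * real m + 1) ^ n / w"
      using fits[of k] \<open>w > 0\<close> by (simp add: card_box field_simps)
    then show ?thesis
      unfolding bound_def by (simp add: divide_right_mono power_divide field_simps)
  qed
  then have "upper_density n C \<le> limsup (\<lambda>k. ereal (bound k))"
    unfolding upper_density_def by (intro Limsup_mono) auto
  moreover have "(\<lambda>k::nat. (2 * real k + 2 * real m + 1) / (2 * real k + 1)) \<longlonglongrightarrow> 1"
    by real_asymp
  then have "bound \<longlonglongrightarrow> 1 / w * 1 ^ n"
    unfolding bound_def by (intro tendsto_intros)
  then have "limsup (\<lambda>k. ereal (bound k)) = ereal (1 / w)"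
    by (intro lim_imp_Limsup) auto
  ultimately show ?thesis by simp
qed

theorem theorem1:
  fixes n h :: nat and a t :: int and C :: "int list set"
  assumes "n > 0" "a > 0" "h > 0" "t > 0"
    and "h \<le> n" "a \<le> t" "t \<le> a * int h"
    and "AED_code n a h t C"
  shows "upper_density n C \<le> ereal (1 / (real_of_int t + 1))"
proof (rule upper_density_le)
  fix k
  have "card (C \<inter> box n k) * (nat t + 1) \<le> card (box n (k + nat a))"
    using AED_code_card_box_le[OF assms(8,2) _ assms(7,5)] \<open>t > 0\<close> by simp
  then have "real (card (C \<inter> box n k) * (nat t + 1)) \<le> real (card (box n (k + nat a)))"
    by (rule of_nat_mono)
  then show "real (card (C \<inter> box n k)) * (real_of_int t + 1) \<le> real (card (box n (k + nat a)))"
    using \<open>t > 0\<close> by (simp add: distrib_left)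
qed (use \<open>t > 0\<close> in simp)

end
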